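(* Let $\Gamma$ be a distance-regular graph with diameter $3$, $n$ vertices and eigenvalues $k>\theta_1>\theta_2>\theta_3$, and let $m_1$ be the multiplicity of $\theta_1$. If $n\geq \frac{(m_1+2)(m_1+1)}{2}$, then $q^2_{11}=0$ or $q^3_{11}=0$, and hence $\Gamma$ is $Q$-polynomial with respect to $\theta_1$.
   Context: A connected graph $\Gamma$ of diameter $D$ is distance-regular if there are integers $b_i,c_i$ ($0\le i\le D$) such that for any two vertices $x,y$ at distance $i$, exactly $c_i$ neighbours of $y$ are at distance $i-1$ from $x$ and exactly $b_i$ neighbours of $y$ are at distance $i+1$ from $x$. Its eigenvalues (of the adjacency matrix) are $k=\theta_0>\theta_1>\dots>\theta_D$. Let $E_i$ be the orthogonal projection onto the eigenspace of $\theta_i$ (so $E_0=\frac1nJ$). The Krein parameters $q^h_{ij}$ are defined by $E_i\circ E_j=\frac1n\sum_{h=0}^D q^h_{ij}E_h$, where $\circ$ is the entrywise product. $\Gamma$ is $Q$-polynomial with respect to $\theta_1$ if there is an ordering $E_0,E_1,F_2,\dots,F_D$ of the primitive idempotents, beginning with $E_0$ and the projection $E_1$ for $\theta_1$, such that in this ordering the Krein parameter $q^{h}_{1j}$ vanishes whenever the positions $j,h$ satisfy $|j-h|>1$. *)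

theory Defs
  imports "HOL-Analysis.Analysis"
begin

definition simple_graph :: "('a \<Rightarrow> 'a \<Rightarrow> bool) \<Rightarrow> bool" where
  "simple_graph adj \<longleftrightarrow> (\<forall>x y. adj x y \<longrightarrow> adj y x) \<and> (\<forall>x. \<not> adj x x)"

definition walk_of_length :: "('a \<Rightarrow> 'a \<Rightarrow> bool) \<Rightarrow> nat \<Rightarrow> 'a \<Rightarrow> 'a \<Rightarrow> bool" where
  "walk_of_length adj d x y \<longleftrightarrow>
     (\<exists>p :: nat \<Rightarrow> 'a. p 0 = x \<and> p d = y \<and> (\<forall>i<d. adj (p i) (p (Suc i))))"

definition connected_graph :: "('a \<Rightarrow> 'a \<Rightarrow> bool) \<Rightarrow> bool" where
  "connected_graph adj \<longleftrightarrow> (\<forall>x y. \<exists>d. walk_of_length adj d x y)"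

definition gdist :: "('a \<Rightarrow> 'a \<Rightarrow> bool) \<Rightarrow> 'a \<Rightarrow> 'a \<Rightarrow> nat" where
  "gdist adj x y = (LEAST d. walk_of_length adj d x y)"

definition graph_diameter :: "('a::finite \<Rightarrow> 'a \<Rightarrow> bool) \<Rightarrow> nat" where
  "graph_diameter adj = Max {gdist adj x y | x y. True}"

definition distance_regular :: "('a::finite \<Rightarrow> 'a \<Rightarrow> bool) \<Rightarrow> bool" where
  "distance_regular adj \<longleftrightarrow> simple_graph adj \<and> connected_graph adj \<and>
     (\<exists>b c :: nat \<Rightarrow> nat. \<forall>x y. let i = gdist adj x y in
        (0 < i \<longrightarrow> card {z. adj y z \<and> gdist adj x z = i - 1} = c i) \<and>
        card {z. adj y z \<and> gdist adj x z = i + 1} = b i)"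

definition adj_matrix :: "('a::finite \<Rightarrow> 'a \<Rightarrow> bool) \<Rightarrow> real^'a^'a" where
  "adj_matrix adj = (\<chi> i j. if adj i j then 1 else 0)"

definition eigenspace :: "('a::finite \<Rightarrow> 'a \<Rightarrow> bool) \<Rightarrow> real \<Rightarrow> (real^'a) set" where
  "eigenspace adj \<theta> = {v. adj_matrix adj *v v = \<theta> *s v}"

definition graph_eigenvalues :: "('a::finite \<Rightarrow> 'a \<Rightarrow> bool) \<Rightarrow> real set" where
  "graph_eigenvalues adj = {\<theta>. \<exists>v. v \<noteq> 0 \<and> adj_matrix adj *v v = \<theta> *s v}"

text \<open>Multiplicity of an eigenvalue (dimension of its eigenspace; the adjacency matrix
  is symmetric so geometric and algebraic multiplicity agree).\<close>
definition eig_mult :: "('a::finite \<Rightarrow> 'a \<Rightarrow> bool) \<Rightarrow> real \<Rightarrow> nat" where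
  "eig_mult adj \<theta> = dim (eigenspace adj \<theta>)"

definition eig_proj :: "('a::finite \<Rightarrow> 'a \<Rightarrow> bool) \<Rightarrow> real \<Rightarrow> real^'a^'a" where
  "eig_proj adj \<theta> = (THE P. transpose P = P \<and> P ** P = P \<and>
                              range (\<lambda>x. P *v x) = eigenspace adj \<theta>)"

definition hadamard :: "real^'a^'a \<Rightarrow> real^'a^'a \<Rightarrow> real^'a^'a" where
  "hadamard M N = (\<chi> i j. M $ i $ j * N $ i $ j)"

text \<open>Krein parameters, indexed by eigenvalues: krein adj \<theta>i \<theta>j \<theta>h = q^h_{ij},
  defined by E_i \<circ> E_j = (1/n) \<Sum>_h q^h_{ij} E_h.\<close>
definition krein :: "('a::finite \<Rightarrow> 'a \<Rightarrow> bool) \<Rightarrow> real \<Rightarrow> real \<Rightarrow> real \<Rightarrow> real" where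
  "krein adj \<theta>i \<theta>j = (THE q. (\<forall>\<theta>. \<theta> \<notin> graph_eigenvalues adj \<longrightarrow> q \<theta> = 0) \<and>
      hadamard (eig_proj adj \<theta>i) (eig_proj adj \<theta>j) =
        (1 / real CARD('a)) *\<^sub>R (\<Sum>\<theta>\<in>graph_eigenvalues adj. q \<theta> *\<^sub>R eig_proj adj \<theta>))"

text \<open>Q-polynomial with respect to \<theta>: an ordering \<sigma> 0, ..., \<sigma> D of the eigenvalues
  (hence of the primitive idempotents) starting with the largest eigenvalue k
  (E_0 = J/n) and \<theta>, such that q^{\<sigma> h}_{\<sigma> 1, \<sigma> j} = 0 whenever |j - h| > 1.\<close>
definition Q_polynomial_wrt :: "('a::finite \<Rightarrow> 'a \<Rightarrow> bool) \<Rightarrow> real \<Rightarrow> bool" where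
  "Q_polynomial_wrt adj \<theta> \<longleftrightarrow>
     (\<exists>\<sigma> :: nat \<Rightarrow> real. bij_betw \<sigma> {0..graph_diameter adj} (graph_eigenvalues adj) \<and>
        \<sigma> 0 = Max (graph_eigenvalues adj) \<and> \<sigma> 1 = \<theta> \<and>
        (\<forall>j h. j \<le> graph_diameter adj \<longrightarrow> h \<le> graph_diameter adj \<longrightarrow> 1 < \<bar>int j - int h\<bar> \<longrightarrow>
            krein adj (\<sigma> 1) (\<sigma> j) (\<sigma> h) = 0))"

end

theory Submission
  imports Defs "HOL-Computational_Algebra.Polynomial"
begin

text \<open>
  The distance matrices span a space of dimension at most \<open>D + 1\<close> that contains the adjacency
  matrix \<open>A\<close> and is closed under multiplication by \<open>A\<close> and under the entrywise product.
  Hence \<open>A\<close> is annihilated by \<open>\<Prod>(x - \<eta>)\<close> over its \<open>D + 1\<close> eigenvalues, the projections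
  \<open>E\<^sub>\<theta>\<close> are Lagrange polynomials in \<open>A\<close> and form a basis of that space, and the Krein
  parameters are the coordinates of \<open>E\<^sub>i \<circ> E\<^sub>j\<close> in this basis.

  Writing \<open>E\<^sub>1 = \<Sum> b b\<^sup>T\<close> over an orthonormal basis of the \<open>\<theta>\<^sub>1\<close>-eigenspace shows that
  \<open>E\<^sub>1 \<circ> E\<^sub>1\<close> has rank at most \<open>m(m+1)/2\<close>. Since \<open>E\<^sub>0 = J/n\<close>, \<open>q\<^sup>0\<^sub>1\<^sub>1 \<noteq> 0\<close>; if also
  \<open>q\<^sup>2\<^sub>1\<^sub>1 \<noteq> 0\<close> and \<open>q\<^sup>3\<^sub>1\<^sub>1 \<noteq> 0\<close>, the column space of \<open>E\<^sub>1 \<circ> E\<^sub>1\<close> contains the kernel of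
  \<open>E\<^sub>1\<close>, so \<open>n - m \<le> m(m+1)/2\<close>, contradicting the hypothesis. If \<open>q\<^sup>\<zeta>\<^sub>1\<^sub>1 = 0\<close>, the
  ordering \<open>k, \<theta>\<^sub>1, \<eta>, \<zeta>\<close> is Q-polynomial: \<open>E\<^sub>0 = J/n\<close> kills the Krein parameters
  involving index \<open>0\<close> off the diagonal, and \<open>q\<^sup>1\<^sub>1\<^sub>\<zeta>\<close> vanishes with \<open>q\<^sup>\<zeta>\<^sub>1\<^sub>1\<close> because
  \<open>q\<^sup>h\<^sub>i\<^sub>j tr E\<^sub>h\<close> is symmetric in \<open>j\<close> and \<open>h\<close>.
\<close>

section \<open>Distances in distance-regular graphs\<close>

lemma walk_of_length_0: "walk_of_length adj 0 x y \<longleftrightarrow> x = y"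
  unfolding walk_of_length_def by auto

lemma walk_of_length_snoc:
  assumes "walk_of_length adj d x y" and "adj y z"
  shows "walk_of_length adj (Suc d) x z"
proof -
  obtain p where p: "p 0 = x" "p d = y" "\<forall>i<d. adj (p i) (p (Suc i))"
    using assms(1) unfolding walk_of_length_def by blast
  show ?thesis
    unfolding walk_of_length_def
    by (rule exI[of _ "p(Suc d := z)"]) (use p assms(2) in \<open>auto simp: less_Suc_eq\<close>)
qed

lemma walk_of_length_rev:
  assumes sym: "\<And>x y. adj x y \<Longrightarrow> adj y x" and "walk_of_length adj d x y"
  shows "walk_of_length adj d y x"
proof -
  obtain p where p: "p 0 = x" "p d = y" "\<forall>i<d. adj (p i) (p (Suc i))"
    using assms(2) unfolding walk_of_length_def by blast
  show ?thesis unfolding walk_of_length_def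
  proof (rule exI[of _ "\<lambda>i. p (d - i)"], intro conjI allI impI)
    fix i assume "i < d"
    then have "adj (p (d - Suc i)) (p (Suc (d - Suc i)))" and "Suc (d - Suc i) = d - i"
      using p by auto
    then show "adj (p (d - i)) (p (d - Suc i))" using sym by metis
  qed (use p in auto)
qed

locale connected_simple_graph =
  fixes adj :: "'a \<Rightarrow> 'a \<Rightarrow> bool"
  assumes simple: "simple_graph adj" and connected: "connected_graph adj"
begin

lemma adj_sym: "adj x y \<Longrightarrow> adj y x"
  using simple unfolding simple_graph_def by auto

lemma adj_irrefl: "\<not> adj x x"
  using simple unfolding simple_graph_def by auto

lemma walk_of_length_gdist: "walk_of_length adj (gdist adj x y) x y"
  unfolding gdist_def by (rule LeastI_ex) (use connected in \<open>auto simp: connected_graph_def\<close>)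

lemma gdist_le_walk_length: "walk_of_length adj d x y \<Longrightarrow> gdist adj x y \<le> d"
  unfolding gdist_def by (rule Least_le)

lemma gdist_sym: "gdist adj x y = gdist adj y x"
  by (meson antisym gdist_le_walk_length walk_of_length_rev adj_sym walk_of_length_gdist)

lemma gdist_eq_0_iff: "gdist adj x y = 0 \<longleftrightarrow> x = y"
  using walk_of_length_gdist[of x y] gdist_le_walk_length[of 0 x y] walk_of_length_0 by fastforce

lemma gdist_refl [simp]: "gdist adj x x = 0"
  by (simp add: gdist_eq_0_iff)

lemma gdist_Suc_le: "adj y z \<Longrightarrow> gdist adj x z \<le> Suc (gdist adj x y)"
  using gdist_le_walk_length[OF walk_of_length_snoc[OF walk_of_length_gdist]] .

lemma adj_iff_gdist_eq_1: "adj x z \<longleftrightarrow> gdist adj x z = 1"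
proof
  assume "adj x z"
  then show "gdist adj x z = 1"
    using gdist_Suc_le[of x z x] gdist_eq_0_iff[of x z] adj_irrefl by fastforce
next
  assume "gdist adj x z = 1"
  then show "adj x z"
    using walk_of_length_gdist[of x z] unfolding walk_of_length_def by auto
qed

end

locale distance_regular_graph =
  fixes adj :: "'a::finite \<Rightarrow> 'a \<Rightarrow> bool"
  assumes distance_regular: "distance_regular adj"

sublocale distance_regular_graph \<subseteq> connected_simple_graph
  using distance_regular unfolding distance_regular_def by unfold_locales auto

context distance_regular_graph
begin

lemma gdist_le_diameter: "gdist adj x y \<le> graph_diameter adj"
  unfolding graph_diameter_def
proof (rule Max_ge)
  have "{gdist adj x y |x y. True} = (\<lambda>(x, y). gdist adj x y) ` UNIV" by auto
  then show "finite {gdist adj x y |x y. True}" by simp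
qed auto

lemma card_neighbours_split:
  assumes "gdist adj x y = Suc i"
  defines "S \<equiv> \<lambda>j. {z. adj y z \<and> gdist adj x z = j}"
  shows "card {z. adj y z} = card (S i) + card (S (Suc i)) + card (S (Suc (Suc i)))"
proof -
  have "{z. adj y z} = S i \<union> S (Suc i) \<union> S (Suc (Suc i))"
    using gdist_Suc_le[of y _ x] gdist_Suc_le[of _ y x] adj_sym assms by (fastforce simp: S_def)
  moreover have "S i \<inter> S (Suc i) = {}" "(S i \<union> S (Suc i)) \<inter> S (Suc (Suc i)) = {}"
    by (auto simp: S_def)
  ultimately show ?thesis
    by (simp add: card_Un_disjoint)
qed

lemma neighbours_at_distance_regular:
  "\<exists>f. \<forall>x y. card {z. adj y z \<and> gdist adj x z = j} = f (gdist adj x y)"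
proof -
  obtain b c :: "nat \<Rightarrow> nat" where bc: "\<And>x y. let i = gdist adj x y in
      (0 < i \<longrightarrow> card {z. adj y z \<and> gdist adj x z = i - 1} = c i) \<and>
      card {z. adj y z \<and> gdist adj x z = i + 1} = b i"
    using distance_regular unfolding distance_regular_def by blast
  have valency: "card {z. adj y z} = b 0" for y
    using bc[of y y] adj_iff_gdist_eq_1 by (simp add: Let_def)
  define f where "f i = (if j = Suc i then b i else if Suc j = i then c i
    else if j = i \<and> 0 < i then b 0 - b i - c i else 0)" for i
  have "card {z. adj y z \<and> gdist adj x z = j} = f (gdist adj x y)" for x y
  proof -
    let ?S = "\<lambda>j. {z. adj y z \<and> gdist adj x z = j}"
    let ?i = "gdist adj x y"
    consider "j = Suc ?i" | "Suc j = ?i" | "j = ?i" "0 < ?i"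
      | "j \<noteq> Suc ?i" "Suc j \<noteq> ?i" "j = ?i \<longrightarrow> ?i = 0"
      by blast
    then show ?thesis
    proof cases
      case 2
      then have "j = ?i - 1" by simp
      with 2 show ?thesis using bc[of x y] by (auto simp: Let_def f_def)
    next
      case 3
      then obtain i where i: "?i = Suc i" "j = Suc i" using gr0_conv_Suc by auto
      then show ?thesis
        using bc[of x y] card_neighbours_split[OF i(1)] valency[of y] by (simp add: Let_def f_def)
    next
      case 4
      have "?S j = {}"
        using 4 gdist_Suc_le[of y _ x] gdist_Suc_le[of _ y x] adj_sym adj_irrefl gdist_eq_0_iff
        by (fastforce simp: le_Suc_eq)
      then show ?thesis using 4 by (auto simp: f_def)
    qed (use bc[of x y] in \<open>simp add: Let_def f_def\<close>)
  qed
  then show ?thesis by blast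
qed

definition intersection_number :: "nat \<Rightarrow> nat \<Rightarrow> nat" where
  "intersection_number i j =
     (SOME f. \<forall>x y. card {z. adj y z \<and> gdist adj x z = j} = f (gdist adj x y)) i"

lemma card_neighbours_at_distance:
  "card {z. adj y z \<and> gdist adj x z = j} = intersection_number (gdist adj x y) j"
  unfolding intersection_number_def by (rule someI_ex[OF neighbours_at_distance_regular, rule_format])

definition valency :: nat where
  "valency = intersection_number 0 1"

lemma card_neighbours: "card {z. adj y z} = valency"
  using card_neighbours_at_distance[of y y 1] adj_iff_gdist_eq_1 by (simp add: valency_def)

end

section \<open>Matrix polynomials and Lagrange interpolation\<close>

lemma matrix_add_rdistrib: "(B + C) ** A = B ** A + C ** (A::'a::semiring_1^'n^'m)"
  by (simp add: matrix_matrix_mult_def vec_eq_iff sum.distrib algebra_simps)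

lemma sum_matrix_mult: "(\<Sum>i\<in>S. f i) ** (B::'a::semiring_1^'n^'m) = (\<Sum>i\<in>S. f i ** B)"
  by (induction S rule: infinite_finite_induct) (auto simp: matrix_add_rdistrib)

lemma sum_matrix_vector_mult: "(\<Sum>i\<in>S. f i) *v (w::'a::semiring_1^'n) = (\<Sum>i\<in>S. f i *v w)"
  by (induction S rule: infinite_finite_induct) (auto simp: matrix_vector_mult_add_rdistrib)

lemma transpose_symmetric_entry: "transpose M = M \<Longrightarrow> M $ y $ x = M $ x $ y"
  by (metis transpose_def vec_lambda_beta)

lemma matrix_diff_rdistrib: "(B - C) ** A = B ** A - C ** (A::'a::ring_1^'n^'m)"
  by (simp add: matrix_matrix_mult_def vec_eq_iff sum_subtractf algebra_simps)

lemma trace_scaleR: "trace (c *\<^sub>R (M::real^'n^'n)) = c * trace M"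
  by (simp add: trace_def sum_distrib_left)

lemma all_ones_mult_symmetric:
  fixes M :: "real^'n^'n"
  assumes "transpose M = M"
  shows "(\<chi> x y. 1) ** M = (\<chi> x y. (M *v (\<chi> x. 1)) $ y)"
  using transpose_symmetric_entry[OF assms]
  by (simp add: matrix_matrix_mult_def matrix_vector_mult_def vec_eq_iff)

definition mat_poly :: "real^'n^'n \<Rightarrow> real poly \<Rightarrow> real^'n^'n" where
  "mat_poly M p = fold_coeffs (\<lambda>a N. a *\<^sub>R mat 1 + M ** N) p 0"

lemma mat_poly_0 [simp]: "mat_poly M 0 = 0"
  by (simp add: mat_poly_def)

lemma mat_poly_pCons [simp]: "mat_poly M (pCons a p) = a *\<^sub>R mat 1 + M ** mat_poly M p"
  by (cases "p = 0"; cases "a = 0") (simp_all add: mat_poly_def)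

lemma mat_poly_add [simp]: "mat_poly M (p + q) = mat_poly M p + mat_poly M q"
proof (induction p arbitrary: q rule: pCons_induct)
  case (pCons a p)
  obtain b q' where "q = pCons b q'" by (cases q)
  with pCons.IH[of q'] show ?case by (simp add: matrix_add_ldistrib algebra_simps)
qed simp

lemma mat_poly_smult [simp]: "mat_poly M (smult c p) = c *\<^sub>R mat_poly M p"
  by (induction p rule: pCons_induct)
     (simp_all add: matrix_scalar_ac scalar_matrix_assoc[symmetric] scaleR_add_right)

lemma mat_poly_mult [simp]: "mat_poly M (p * q) = mat_poly M p ** mat_poly M q"
proof (induction p rule: pCons_induct)
  case (pCons a p)
  have "mat_poly M (pCons a p * q) = a *\<^sub>R mat_poly M q + M ** (mat_poly M p ** mat_poly M q)"
    by (simp add: mult_pCons_left pCons)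
  also have "\<dots> = (a *\<^sub>R mat 1 + M ** mat_poly M p) ** mat_poly M q"
    by (simp add: matrix_add_rdistrib matrix_mul_assoc scalar_matrix_assoc[symmetric])
  finally show ?case by simp
qed simp

lemma mat_poly_1 [simp]: "mat_poly M 1 = mat 1"
  by (simp add: one_pCons)

lemma mat_poly_sum: "mat_poly M (\<Sum>i\<in>S. f i) = (\<Sum>i\<in>S. mat_poly M (f i))"
  by (induction S rule: infinite_finite_induct) auto

lemma mat_poly_eigenvector:
  assumes "M *v v = t *\<^sub>R v"
  shows "mat_poly M p *v v = poly p t *\<^sub>R v"
proof (induction p rule: pCons_induct)
  case (pCons a p)
  then show ?case
    using assms by (simp add: matrix_vector_mult_add_rdistrib scaleR_matrix_vector_assoc[symmetric]
        matrix_vector_mul_assoc[symmetric] matrix_vector_mult_scaleR algebra_simps)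
qed simp

lemma transpose_mat_poly:
  assumes "transpose M = M"
  shows "transpose (mat_poly M p) = mat_poly M p"
proof (induction p rule: pCons_induct)
  case (pCons a p)
  have "M ** mat_poly M p = mat_poly M p ** M"
    using mat_poly_mult[of M "[:0, 1:]" p] mat_poly_mult[of M p "[:0, 1:]"] by (simp add: mult.commute)
  moreover have transpose_add: "transpose (X + Y) = transpose X + transpose Y" for X Y :: "real^'n^'n"
    by (simp add: transpose_def vec_eq_iff)
  ultimately show ?case
    using pCons assms by (simp only: mat_poly_pCons transpose_add transpose_scalar
        matrix_transpose_mul transpose_mat)
qed (simp add: transpose_def vec_eq_iff)

definition lagrange_poly :: "real set \<Rightarrow> real \<Rightarrow> real poly" where
  "lagrange_poly S \<theta> = smult (1 / (\<Prod>\<eta>\<in>S - {\<theta>}. \<theta> - \<eta>)) (\<Prod>\<eta>\<in>S - {\<theta>}. [:-\<eta>, 1:])"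

lemma poly_lagrange_poly:
  assumes "finite S" "\<eta> \<in> S"
  shows "poly (lagrange_poly S \<theta>) \<eta> = (if \<eta> = \<theta> then 1 else 0)"
  using assms by (auto simp: lagrange_poly_def poly_prod prod_zero_iff)

lemma degree_lagrange_poly:
  assumes "finite S" "\<theta> \<in> S"
  shows "degree (lagrange_poly S \<theta>) < card S"
proof -
  have "degree (\<Prod>\<eta>\<in>S - {\<theta>}. [:-\<eta>, 1::real:]) = card S - 1"
    using assms by (subst degree_prod_sum_eq) auto
  then show ?thesis
    using assms card_gt_0_iff degree_smult_le unfolding lagrange_poly_def
    by (metis One_nat_def diff_less le_less_trans less_numeral_extra(1) empty_iff)
qed

lemma sum_lagrange_poly:
  assumes "finite S" "S \<noteq> {}"
  shows "(\<Sum>\<theta>\<in>S. lagrange_poly S \<theta>) = 1"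
proof (rule poly_eqI_degree[of S])
  show "poly (\<Sum>\<theta>\<in>S. lagrange_poly S \<theta>) x = poly 1 x" if "x \<in> S" for x
    using that assms by (simp add: poly_sum poly_lagrange_poly)
  show "degree (\<Sum>\<theta>\<in>S. lagrange_poly S \<theta>) < card S"
    using assms by (intro degree_sum_less) (auto simp: degree_lagrange_poly card_gt_0_iff)
qed (use assms in \<open>simp add: card_gt_0_iff\<close>)

lemma linear_factor_times_lagrange_poly:
  assumes "finite S" "\<theta> \<in> S"
  shows "[:-\<theta>, 1:] * lagrange_poly S \<theta> = smult (1 / (\<Prod>\<eta>\<in>S - {\<theta>}. \<theta> - \<eta>)) (\<Prod>\<eta>\<in>S. [:-\<eta>, 1:])"
  using assms by (simp add: lagrange_poly_def prod.remove[of S \<theta>])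

section \<open>Symmetric idempotents and their entrywise squares\<close>

lemma subspace_range_matrix_vector_mult: "subspace (range (\<lambda>x. (M::real^'n^'m) *v x))"
  by (rule linear_subspace_image[OF matrix_vector_mul_linear subspace_UNIV])

lemma symmetric_idempotent_eqI:
  fixes P Q :: "real^'n^'n"
  assumes "transpose P = P" "P ** P = P" "transpose Q = Q" "Q ** Q = Q"
    and "range (\<lambda>x. P *v x) = range (\<lambda>x. Q *v x)"
  shows "P = Q"
proof -
  have absorb: "X ** Y = Y"
    if idem: "X ** X = X" and sub: "range (\<lambda>x. Y *v x) \<subseteq> range (\<lambda>x. X *v x)"
    for X Y :: "real^'n^'n"
  proof (rule matrix_eq[THEN iffD2], rule allI)
    fix x
    obtain y where "Y *v x = X *v y" using sub by auto
    then show "(X ** Y) *v x = Y *v x"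
      by (metis matrix_vector_mul_assoc idem)
  qed
  have "P = transpose (Q ** P)"
    using absorb[of Q P] assms by simp
  also have "\<dots> = P ** Q"
    using assms by (simp add: matrix_transpose_mul)
  also have "\<dots> = Q"
    using absorb[of P Q] assms by simp
  finally show ?thesis .
qed

definition outer_prod :: "real^'n \<Rightarrow> real^'n \<Rightarrow> real^'n^'n" where
  "outer_prod b c = (\<chi> x y. b $ x * c $ y)"

lemma outer_prod_mult: "outer_prod b b *v w = (b \<bullet> w) *\<^sub>R b"
  by (simp add: outer_prod_def matrix_vector_mult_def inner_vec_def vec_eq_iff sum_distrib_left mult_ac)

lemma hadamard_sum_outer_prod:
  "hadamard (\<Sum>b\<in>B. outer_prod b b) (\<Sum>c\<in>B. outer_prod c c) = (\<Sum>b\<in>B. \<Sum>c\<in>B. outer_prod (b * c) (b * c))"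
  by (simp add: hadamard_def outer_prod_def vec_eq_iff sum_component sum_product mult_ac)

lemma sum_outer_prod_orthonormal:
  fixes B :: "(real^'n) set"
  assumes "finite B" and orth: "pairwise orthogonal B" and unit: "\<And>b. b \<in> B \<Longrightarrow> norm b = 1"
  defines "P \<equiv> \<Sum>b\<in>B. outer_prod b b"
  shows "transpose P = P" "P ** P = P" "range (\<lambda>x. P *v x) = span B"
proof -
  have P_mult: "P *v w = (\<Sum>b\<in>B. (b \<bullet> w) *\<^sub>R b)" for w
    by (simp add: P_def sum_matrix_vector_mult outer_prod_mult)
  have "P *v c = c" if "c \<in> B" for c
  proof -
    have "(b \<bullet> c) *\<^sub>R b = (if b = c then c else 0)" if "b \<in> B" for b
      using orth \<open>c \<in> B\<close> that unit[of c] unfolding pairwise_def orthogonal_def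
      by (auto simp: norm_eq_1)
    then show ?thesis
      using \<open>c \<in> B\<close> assms(1) by (simp add: P_mult)
  qed
  then have P_fix: "P *v u = u" if "u \<in> span B" for u
    using span_induct[OF that, of "\<lambda>u. P *v u = u"]
    by (auto simp: subspace_def matrix_vector_right_distrib matrix_vector_mult_scaleR)
  have P_span: "P *v w \<in> span B" for w
    unfolding P_mult by (intro span_sum span_scale span_base) auto
  show "transpose P = P"
    by (simp add: P_def transpose_def outer_prod_def vec_eq_iff mult.commute)
  show "P ** P = P"
    by (rule matrix_eq[THEN iffD2]) (simp add: matrix_vector_mul_assoc[symmetric] P_fix P_span)
  show "range (\<lambda>x. P *v x) = span B"
    using P_fix P_span by (metis (mono_tags, lifting) image_subset_iff rangeI subsetI subset_antisym)
qed

lemma symmetric_idempotent_eq_sum_outer_prod: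
  fixes P :: "real^'n^'n"
  assumes "transpose P = P" "P ** P = P"
  obtains B where "finite B" "card B = dim (range (\<lambda>x. P *v x))" "P = (\<Sum>b\<in>B. outer_prod b b)"
proof -
  obtain B where B: "pairwise orthogonal B" "\<And>b. b \<in> B \<Longrightarrow> norm b = 1" "independent B"
      "card B = dim (range (\<lambda>x. P *v x))" "span B = range (\<lambda>x. P *v x)"
    using orthonormal_basis_subspace[OF subspace_range_matrix_vector_mult] by metis
  have "finite B"
    using B(3) by (rule independent_imp_finite)
  then have "P = (\<Sum>b\<in>B. outer_prod b b)"
    using symmetric_idempotent_eqI[OF assms] sum_outer_prod_orthonormal[OF _ B(1,2)] B(5) by metis
  with \<open>finite B\<close> B(4) show ?thesis
    using that by blast
qed

lemma card_pairwise_products_le: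
  fixes B :: "'a::comm_monoid_mult set"
  assumes "finite B"
  shows "2 * card {b * c | b c. b \<in> B \<and> c \<in> B} \<le> card B * (card B + 1)"
proof -
  let ?S = "(\<lambda>b. b * b) ` B \<union> prod id ` {S. S \<subseteq> B \<and> card S = 2}"
  have "{b * c | b c. b \<in> B \<and> c \<in> B} \<subseteq> ?S"
  proof
    fix v assume "v \<in> {b * c | b c. b \<in> B \<and> c \<in> B}"
    then obtain b c where v: "v = b * c" "b \<in> B" "c \<in> B" by blast
    show "v \<in> ?S"
    proof (cases "b = c")
      case False
      then have "v = prod id {b, c}" using v by simp
      then show ?thesis using v False by (intro UnI2 image_eqI[of _ _ "{b, c}"]) auto
    qed (use v in blast)
  qed
  then have "card {b * c | b c. b \<in> B \<and> c \<in> B} \<le> card ?S"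
    using assms by (intro card_mono) auto
  also have "\<dots> \<le> card ((\<lambda>b. b * b) ` B) + card (prod id ` {S. S \<subseteq> B \<and> card S = 2})"
    by (rule card_Un_le)
  also have "\<dots> \<le> card B + card {S. S \<subseteq> B \<and> card S = 2}"
    by (intro add_mono card_image_le) (use assms in auto)
  also have "\<dots> = card B + (card B choose 2)"
    using n_subsets[OF assms] by simp
  finally have "2 * card {b * c | b c. b \<in> B \<and> c \<in> B} \<le> 2 * card B + 2 * (card B choose 2)"
    by linarith
  also have "\<dots> = card B * (card B + 1)"
    by (cases "card B") (simp_all add: choose_two algebra_simps)
  finally show ?thesis .
qed

lemma dim_range_hadamard_square_le:
  fixes P :: "real^'n^'n"
  assumes "transpose P = P" "P ** P = P"
  defines "m \<equiv> dim (range (\<lambda>x. P *v x))"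
  shows "2 * dim (range (\<lambda>x. hadamard P P *v x)) \<le> m * (m + 1)"
proof -
  obtain B where B: "finite B" "card B = m" "P = (\<Sum>b\<in>B. outer_prod b b)"
    using symmetric_idempotent_eq_sum_outer_prod[OF assms(1,2)] unfolding m_def by metis
  let ?G = "{b * c | b c. b \<in> B \<and> c \<in> B}"
  have "hadamard P P *v w = (\<Sum>b\<in>B. \<Sum>c\<in>B. ((b * c) \<bullet> w) *\<^sub>R (b * c))" for w
    by (simp add: B(3) hadamard_sum_outer_prod sum_matrix_vector_mult outer_prod_mult)
  then have "hadamard P P *v w \<in> span ?G" for w
    by (simp only:) (intro span_sum span_scale span_base; blast)
  then have "range (\<lambda>x. hadamard P P *v x) \<subseteq> span ?G"
    by auto
  moreover have "finite ?G"
    using B(1) by (simp add: finite_image_set2)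
  ultimately have "dim (range (\<lambda>x. hadamard P P *v x)) \<le> card ?G"
    by (rule dim_le_card)
  with card_pairwise_products_le[OF B(1)] show ?thesis
    unfolding B(2) by linarith
qed

lemma dim_kernel_plus_dim_range_idempotent:
  fixes P :: "real^'n^'n"
  assumes "P ** P = P"
  shows "dim {w. P *v w = 0} + dim (range (\<lambda>x. P *v x)) = CARD('n)"
proof -
  let ?K = "{w. P *v w = 0}" and ?R = "range (\<lambda>x. P *v x)"
  have K: "subspace ?K"
    by (auto simp: subspace_def matrix_vector_right_distrib matrix_vector_mult_scaleR)
  have sums: "{x + y |x y. x \<in> ?K \<and> y \<in> ?R} = UNIV"
  proof -
    have "w = (w - P *v w) + P *v w" "P *v (w - P *v w) = 0" for w
      using assms by (simp_all add: matrix_vector_mult_diff_distrib matrix_vector_mul_assoc)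
    then show ?thesis by blast
  qed
  have int: "?K \<inter> ?R = {0}"
    using assms by (auto simp: matrix_vector_mul_assoc intro: range_eqI[of _ _ 0])
  show ?thesis
    using dim_sums_Int[OF K subspace_range_matrix_vector_mult[of P]] unfolding sums int
    by (simp add: dim_insert)
qed

lemma trace_pos_symmetric_idempotent:
  fixes P :: "real^'n^'n"
  assumes "transpose P = P" "P ** P = P" "P \<noteq> 0"
  shows "trace P > 0"
proof -
  have diag: "P $ x $ x = (\<Sum>z\<in>UNIV. (P $ x $ z)\<^sup>2)" for x
    using arg_cong[OF assms(2), of "\<lambda>M. M $ x $ x"] transpose_symmetric_entry[OF assms(1)]
    by (simp add: matrix_matrix_mult_def power2_eq_square)
  obtain x z where "P $ x $ z \<noteq> 0"
    using assms(3) by (auto simp: vec_eq_iff)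
  then have "0 < (P $ x $ z)\<^sup>2" by simp
  also have "\<dots> \<le> P $ x $ x"
    unfolding diag by (rule member_le_sum) auto
  also have "\<dots> \<le> trace P"
    unfolding trace_def by (rule member_le_sum) (auto simp: diag intro: sum_nonneg)
  finally show ?thesis .
qed

lemma hadamard_mult_all_ones:
  fixes P Q :: "real^'n^'n"
  assumes "transpose Q = Q"
  shows "hadamard P Q ** (\<chi> x y. 1) = (\<chi> x y. (P ** Q) $ x $ x)"
  using transpose_symmetric_entry[OF assms]
  by (simp add: hadamard_def matrix_matrix_mult_def vec_eq_iff)

lemma trace_hadamard_mult_swap:
  fixes P Q R :: "real^'n^'n"
  assumes "transpose Q = Q" "transpose R = R"
  shows "trace (hadamard P Q ** R) = trace (hadamard P R ** Q)"
  using transpose_symmetric_entry[OF assms(1)] transpose_symmetric_entry[OF assms(2)]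
  by (simp add: trace_def hadamard_def matrix_matrix_mult_def mult_ac)

section \<open>The Bose--Mesner algebra\<close>

context distance_regular_graph
begin

abbreviation Adj :: "real^'a^'a" where "Adj \<equiv> adj_matrix adj"

lemma transpose_adj_matrix: "transpose Adj = Adj"
  by (auto simp: transpose_def adj_matrix_def vec_eq_iff intro: adj_sym)

definition dist_fun_mat :: "(nat \<Rightarrow> real) \<Rightarrow> real^'a^'a" where
  "dist_fun_mat g = (\<chi> x y. g (gdist adj x y))"

definition dist_mat :: "nat \<Rightarrow> real^'a^'a" where
  "dist_mat j = dist_fun_mat (\<lambda>i. if i = j then 1 else 0)"

definition bose_mesner :: "(real^'a^'a) set" where
  "bose_mesner = range dist_fun_mat"

lemma subspace_bose_mesner: "subspace bose_mesner"
proof -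
  have "dist_fun_mat f + dist_fun_mat g = dist_fun_mat (\<lambda>i. f i + g i)"
    "c *\<^sub>R dist_fun_mat f = dist_fun_mat (\<lambda>i. c * f i)" "0 = dist_fun_mat (\<lambda>i. 0)" for f g c
    by (simp_all add: dist_fun_mat_def vec_eq_iff)
  then show ?thesis
    unfolding subspace_def bose_mesner_def by (auto simp del: vector_scaleR_component)
qed

lemma hadamard_dist_fun_mat: "hadamard (dist_fun_mat f) (dist_fun_mat g) = dist_fun_mat (\<lambda>i. f i * g i)"
  by (simp add: hadamard_def dist_fun_mat_def)

lemma hadamard_in_bose_mesner:
  "M \<in> bose_mesner \<Longrightarrow> N \<in> bose_mesner \<Longrightarrow> hadamard M N \<in> bose_mesner"
  by (auto simp: bose_mesner_def hadamard_dist_fun_mat)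

lemma all_ones_in_bose_mesner: "(\<chi> x y. 1) \<in> bose_mesner"
  unfolding bose_mesner_def dist_fun_mat_def by (rule range_eqI[of _ _ "\<lambda>_. 1"]) simp

lemma adj_matrix_mult_dist_fun_mat:
  "Adj ** dist_fun_mat g
     = dist_fun_mat (\<lambda>i. \<Sum>j\<le>graph_diameter adj. g j * real (intersection_number i j))"
proof -
  have "(Adj ** dist_fun_mat g) $ x $ y
      = (\<Sum>j\<le>graph_diameter adj. g j * real (intersection_number (gdist adj x y) j))" for x y
  proof -
    have "(Adj ** dist_fun_mat g) $ x $ y = (\<Sum>z\<in>UNIV. if adj x z then g (gdist adj y z) else 0)"
      by (auto simp: matrix_matrix_mult_def adj_matrix_def dist_fun_mat_def gdist_sym intro: sum.cong)
    also have "\<dots> = (\<Sum>z\<in>{z. adj x z}. g (gdist adj y z))"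
      by (simp add: sum.inter_filter[symmetric])
    also have "\<dots> = (\<Sum>j\<le>graph_diameter adj. \<Sum>z\<in>{z. adj x z \<and> gdist adj y z = j}. g j)"
      by (subst sum.group[symmetric, of _ _ "gdist adj y"]) (auto simp: gdist_le_diameter)
    also have "\<dots> = (\<Sum>j\<le>graph_diameter adj. g j * real (intersection_number (gdist adj x y) j))"
      using card_neighbours_at_distance[of x y] by (simp add: gdist_sym[of y x] mult.commute)
    finally show ?thesis .
  qed
  then show ?thesis
    by (simp add: dist_fun_mat_def vec_eq_iff)
qed

lemma mat_poly_in_bose_mesner: "mat_poly Adj p \<in> bose_mesner"
proof (induction p rule: pCons_induct)
  case 0
  show ?case using subspace_bose_mesner by (simp add: subspace_0)
next
  case (pCons a p)
  have "mat 1 = dist_mat 0"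
    by (auto simp: dist_mat_def dist_fun_mat_def mat_def vec_eq_iff gdist_eq_0_iff)
  then have "a *\<^sub>R mat 1 \<in> bose_mesner"
    using subspace_bose_mesner by (simp add: subspace_scale bose_mesner_def dist_mat_def)
  moreover have "Adj ** mat_poly Adj p \<in> bose_mesner"
    using pCons.IH by (auto simp: bose_mesner_def adj_matrix_mult_dist_fun_mat)
  ultimately show ?case
    using subspace_bose_mesner by (simp add: subspace_add)
qed

lemma bose_mesner_subset_span_dist_mat:
  "bose_mesner \<subseteq> span (dist_mat ` {..graph_diameter adj})"
proof
  fix M assume "M \<in> bose_mesner"
  then obtain g where M: "M = dist_fun_mat g"
    unfolding bose_mesner_def by blast
  have "(\<Sum>j\<le>graph_diameter adj. g j *\<^sub>R dist_mat j) $ x $ y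
      = M $ x $ y" for x y
  proof -
    have "(\<Sum>j\<le>graph_diameter adj. g j *\<^sub>R dist_mat j) $ x $ y
        = (\<Sum>j\<le>graph_diameter adj. g j * (if j = gdist adj x y then 1 else 0))"
      by (simp add: sum_component dist_mat_def dist_fun_mat_def eq_commute)
    also have "\<dots> = (\<Sum>j\<le>graph_diameter adj. if j = gdist adj x y then g j else 0)"
      by (rule sum.cong) auto
    also have "\<dots> = M $ x $ y"
      using gdist_le_diameter[of x y] by (simp add: M dist_fun_mat_def)
    finally show ?thesis .
  qed
  then have "M = (\<Sum>j\<le>graph_diameter adj. g j *\<^sub>R dist_mat j)"
    by (simp add: vec_eq_iff)
  then show "M \<in> span (dist_mat ` {..graph_diameter adj})"
    by (simp only:) (intro span_sum span_scale span_base imageI)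
qed

lemma dim_bose_mesner_le: "dim bose_mesner \<le> Suc (graph_diameter adj)"
proof -
  have "dim bose_mesner
      \<le> card (dist_mat ` {..graph_diameter adj})"
    by (rule dim_le_card[OF bose_mesner_subset_span_dist_mat]) simp
  also have "\<dots> \<le> Suc (graph_diameter adj)"
    using card_image_le[of "{..graph_diameter adj}"] by simp
  finally show ?thesis .
qed

lemma adj_matrix_mult_vector_component: "(Adj *v v) $ x = (\<Sum>z\<in>{z. adj x z}. v $ z)"
proof -
  have "(Adj *v v) $ x = (\<Sum>z\<in>UNIV. if adj x z then v $ z else 0)"
    by (auto simp: matrix_vector_mult_def adj_matrix_def intro: sum.cong)
  then show ?thesis
    by (simp add: sum.inter_filter[symmetric])
qed

lemma adj_matrix_mult_all_ones: "Adj *v (\<chi> x. 1) = real valency *\<^sub>R (\<chi> x. 1)"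
  using card_neighbours by (simp add: vec_eq_iff adj_matrix_mult_vector_component)

lemma eigenvalue_le_valency:
  assumes "v \<noteq> 0" "Adj *v v = \<theta> *\<^sub>R v"
  shows "\<theta> \<le> real valency"
proof -
  have "Max (range (\<lambda>y. \<bar>v $ y\<bar>)) \<in> range (\<lambda>y. \<bar>v $ y\<bar>)"
    by (rule Max_in) auto
  then obtain x where "Max (range (\<lambda>y. \<bar>v $ y\<bar>)) = \<bar>v $ x\<bar>"
    by (rule imageE)
  moreover have "\<bar>v $ y\<bar> \<le> Max (range (\<lambda>y. \<bar>v $ y\<bar>))" for y
    by (rule Max_ge) auto
  ultimately have x: "\<bar>v $ y\<bar> \<le> \<bar>v $ x\<bar>" for y
    by simp
  obtain y where "v $ y \<noteq> 0"
    using assms(1) by (auto simp: vec_eq_iff)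
  with x[of y] have "v $ x \<noteq> 0"
    by auto
  have "\<theta> * v $ x = (\<Sum>z\<in>{z. adj x z}. v $ z)"
    using arg_cong[OF assms(2), of "\<lambda>w. w $ x"] by (simp add: adj_matrix_mult_vector_component)
  then have "\<bar>\<theta>\<bar> * \<bar>v $ x\<bar> = \<bar>\<Sum>z\<in>{z. adj x z}. v $ z\<bar>"
    by (simp add: abs_mult[symmetric])
  also have "\<dots> \<le> (\<Sum>z\<in>{z. adj x z}. \<bar>v $ z\<bar>)"
    by (rule sum_abs)
  also have "\<dots> \<le> (\<Sum>z\<in>{z. adj x z}. \<bar>v $ x\<bar>)"
    by (intro sum_mono x)
  also have "\<dots> = real valency * \<bar>v $ x\<bar>"
    using card_neighbours[of x] by simp
  finally show ?thesis
    using \<open>v $ x \<noteq> 0\<close> by (simp add: abs_le_iff)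
qed

end

section \<open>Primitive idempotents and Krein parameters\<close>

lemma exists_nontrivial_vanishing_combination:
  fixes f :: "nat \<Rightarrow> 'v::real_vector"
  assumes f: "\<And>i. i \<le> n \<Longrightarrow> f i \<in> span T" and T: "finite T" "card T \<le> n"
  shows "\<exists>u. (\<exists>i\<le>n. u i \<noteq> 0) \<and> (\<Sum>i\<le>n. u i *\<^sub>R f i) = 0"
proof (cases "inj_on f {..n}")
  case True
  have "\<not> independent (f ` {..n})"
    using independent_span_bound[OF T(1)] f T(2) card_image[OF True] by fastforce
  then obtain w where w: "\<exists>v\<in>f ` {..n}. w v \<noteq> 0" "(\<Sum>v\<in>f ` {..n}. w v *\<^sub>R v) = 0"
    using dependent_finite[of "f ` {..n}"] by auto
  then show ?thesis
    by (intro exI[of _ "w \<circ> f"]) (auto simp: sum.reindex[OF True])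
next
  case False
  then obtain i j where ij: "i \<le> n" "j \<le> n" "i \<noteq> j" "f i = f j"
    unfolding inj_on_def by auto
  let ?u = "\<lambda>l. if l = i then 1 else if l = j then -1 else (0::real)"
  have "(\<Sum>l\<le>n. ?u l *\<^sub>R f l) = (\<Sum>l\<le>n. (if l = i then f i else 0) - (if l = j then f j else 0))"
    by (intro sum.cong) (use ij in auto)
  also have "\<dots> = 0"
    using ij by (simp add: sum_subtractf)
  finally show ?thesis
    using ij by (intro exI[of _ ?u]) auto
qed

text \<open>Every distance-regular graph of diameter \<open>D\<close> has exactly \<open>D + 1\<close> distinct eigenvalues;
  this is assumed here rather than proved, since the theorem names the eigenvalues explicitly.\<close>
locale drg_spectrum = distance_regular_graph +
  assumes card_spectrum: "card (graph_eigenvalues adj) = Suc (graph_diameter adj)"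
begin

abbreviation spec :: "real set" where "spec \<equiv> graph_eigenvalues adj"

lemma finite_spec [simp]: "finite spec"
  using card_spectrum card.infinite by fastforce

lemma spec_nonempty: "spec \<noteq> {}"
  using card_spectrum by auto

lemma eigenvector_exists:
  assumes "\<theta> \<in> spec"
  obtains v where "v \<noteq> 0" "Adj *v v = \<theta> *\<^sub>R v"
  using assms unfolding graph_eigenvalues_def by (auto simp: scalar_mult_eq_scaleR)

lemma annihilating_poly_exists:
  obtains g where "g \<noteq> 0" "degree g \<le> Suc (graph_diameter adj)" "mat_poly Adj g = 0"
proof -
  let ?D = "graph_diameter adj"
  let ?T = "dist_mat ` {..?D}"
  have "mat_poly Adj (monom 1 i) \<in> span ?T" for i
    using mat_poly_in_bose_mesner bose_mesner_subset_span_dist_mat by blast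
  moreover have "card ?T \<le> Suc ?D"
    using card_image_le[of "{..?D}"] by simp
  ultimately obtain u where u: "\<exists>i\<le>Suc ?D. u i \<noteq> 0"
      "(\<Sum>i\<le>Suc ?D. u i *\<^sub>R mat_poly Adj (monom 1 i)) = 0"
    using exists_nontrivial_vanishing_combination[of "Suc ?D" "\<lambda>i. mat_poly Adj (monom 1 i)" ?T]
    by blast
  define g where "g = (\<Sum>i\<le>Suc ?D. monom (u i) i)"
  have coeff_g: "coeff g i = (if i \<le> Suc ?D then u i else 0)" for i
    by (simp add: g_def coeff_sum coeff_monom)
  have "g \<noteq> 0"
    using u(1) coeff_g by (metis coeff_0)
  moreover have "degree g \<le> Suc ?D"
    by (rule degree_le) (auto simp: coeff_g)
  moreover have "mat_poly Adj g = (\<Sum>i\<le>Suc ?D. u i *\<^sub>R mat_poly Adj (monom 1 i))"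
    unfolding g_def mat_poly_sum
    by (intro sum.cong refl) (rule mat_poly_smult[of Adj _ "monom 1 _", unfolded smult_monom mult_1_right])
  then have "mat_poly Adj g = 0"
    using u(2) by simp
  ultimately show ?thesis
    using that by blast
qed

lemma poly_annihilating_eigenvalue:
  assumes "mat_poly Adj g = 0" "\<theta> \<in> spec"
  shows "poly g \<theta> = 0"
proof -
  obtain v where v: "v \<noteq> 0" "Adj *v v = \<theta> *\<^sub>R v"
    using eigenvector_exists[OF assms(2)] .
  then show ?thesis
    using mat_poly_eigenvector[OF v(2), of g] assms(1) by simp
qed

lemma mat_poly_spec_prod_eq_0: "mat_poly Adj (\<Prod>\<eta>\<in>spec. [:-\<eta>, 1:]) = 0"
proof -
  let ?P = "\<Prod>\<eta>\<in>spec. [:-\<eta>, 1::real:]"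
  obtain g where g: "g \<noteq> 0" "degree g \<le> Suc (graph_diameter adj)" "mat_poly Adj g = 0"
    using annihilating_poly_exists .
  define c where "c = coeff g (card spec)"
  have deg_P: "degree ?P = card spec"
    by (subst degree_prod_sum_eq) auto
  have "g = smult c ?P"
  proof (rule poly_eqI_degree_lead_coeff[of g "card spec" _ spec])
    show "coeff g (card spec) = coeff (smult c ?P) (card spec)"
      using deg_P lead_coeff_prod[of "\<lambda>\<eta>. [:-\<eta>, 1::real:]" spec] by (simp add: c_def)
    show "degree (smult c ?P) \<le> card spec"
      using deg_P degree_smult_le[of c ?P] by simp
    show "poly g z = poly (smult c ?P) z" if "z \<in> spec" for z
      using poly_annihilating_eigenvalue[OF g(3) that] that by (simp add: poly_prod)
  qed (use g(2) card_spectrum in simp_all)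
  with g show ?thesis
    by auto
qed

definition prim_idem :: "real \<Rightarrow> real^'a^'a" where
  "prim_idem \<theta> = mat_poly Adj (lagrange_poly spec \<theta>)"

lemma prim_idem_eigenvector:
  assumes "\<eta> \<in> spec" "Adj *v v = \<eta> *\<^sub>R v"
  shows "prim_idem \<theta> *v v = (if \<eta> = \<theta> then v else 0)"
  using mat_poly_eigenvector[OF assms(2)] poly_lagrange_poly[OF finite_spec assms(1)]
  by (simp add: prim_idem_def)

lemma adj_matrix_mult_prim_idem:
  assumes "\<theta> \<in> spec"
  shows "Adj ** prim_idem \<theta> = \<theta> *\<^sub>R prim_idem \<theta>"
proof -
  have "mat_poly Adj [:-\<theta>, 1:] ** prim_idem \<theta> = 0"
    unfolding prim_idem_def mat_poly_mult[symmetric] linear_factor_times_lagrange_poly[OF finite_spec assms]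
    using mat_poly_spec_prod_eq_0 by simp
  moreover have "mat_poly Adj [:-\<theta>, 1:] = Adj - \<theta> *\<^sub>R mat 1"
    by simp
  ultimately show ?thesis
    by (simp add: matrix_diff_rdistrib scalar_matrix_assoc[symmetric])
qed

lemma prim_idem_mult_vector_eigenvector:
  assumes "\<theta> \<in> spec"
  shows "Adj *v (prim_idem \<theta> *v w) = \<theta> *\<^sub>R (prim_idem \<theta> *v w)"
  using assms by (simp add: matrix_vector_mul_assoc adj_matrix_mult_prim_idem scaleR_matrix_vector_assoc)

lemma prim_idem_mult:
  assumes "\<theta> \<in> spec" "\<eta> \<in> spec"
  shows "prim_idem \<theta> ** prim_idem \<eta> = (if \<theta> = \<eta> then prim_idem \<theta> else 0)"
proof (rule matrix_eq[THEN iffD2], rule allI)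
  fix w
  have "(prim_idem \<theta> ** prim_idem \<eta>) *v w = prim_idem \<theta> *v (prim_idem \<eta> *v w)"
    by (simp add: matrix_vector_mul_assoc)
  also have "\<dots> = (if \<eta> = \<theta> then prim_idem \<eta> *v w else 0)"
    by (rule prim_idem_eigenvector[OF assms(2) prim_idem_mult_vector_eigenvector[OF assms(2)]])
  finally show "(prim_idem \<theta> ** prim_idem \<eta>) *v w = (if \<theta> = \<eta> then prim_idem \<theta> else 0) *v w"
    by auto
qed

lemma sum_prim_idem: "(\<Sum>\<theta>\<in>spec. prim_idem \<theta>) = mat 1"
  unfolding prim_idem_def mat_poly_sum[symmetric] sum_lagrange_poly[OF finite_spec spec_nonempty]
  by simp

lemma transpose_prim_idem: "transpose (prim_idem \<theta>) = prim_idem \<theta>"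
  unfolding prim_idem_def by (rule transpose_mat_poly[OF transpose_adj_matrix])

lemma range_prim_idem:
  assumes "\<theta> \<in> spec"
  shows "range (\<lambda>x. prim_idem \<theta> *v x) = eigenspace adj \<theta>"
proof (intro subset_antisym subsetI)
  fix v assume "v \<in> range (\<lambda>x. prim_idem \<theta> *v x)"
  then show "v \<in> eigenspace adj \<theta>"
    using prim_idem_mult_vector_eigenvector[OF assms] by (auto simp: eigenspace_def scalar_mult_eq_scaleR)
next
  fix v assume "v \<in> eigenspace adj \<theta>"
  then have "v = prim_idem \<theta> *v v"
    using prim_idem_eigenvector[OF assms] by (simp add: eigenspace_def scalar_mult_eq_scaleR)
  then show "v \<in> range (\<lambda>x. prim_idem \<theta> *v x)"
    by (rule range_eqI)
qed

lemma prim_idem_neq_0: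
  assumes "\<theta> \<in> spec"
  shows "prim_idem \<theta> \<noteq> 0"
proof
  assume "prim_idem \<theta> = 0"
  moreover obtain v where "v \<noteq> 0" "Adj *v v = \<theta> *\<^sub>R v"
    using eigenvector_exists[OF assms] .
  ultimately show False
    using prim_idem_eigenvector[OF assms, of v \<theta>] by simp
qed

lemma eig_proj_eq_prim_idem:
  assumes "\<theta> \<in> spec"
  shows "eig_proj adj \<theta> = prim_idem \<theta>"
  unfolding eig_proj_def
proof (rule the_equality)
  show "transpose (prim_idem \<theta>) = prim_idem \<theta> \<and> prim_idem \<theta> ** prim_idem \<theta> = prim_idem \<theta>
      \<and> range (\<lambda>x. prim_idem \<theta> *v x) = eigenspace adj \<theta>"
    using transpose_prim_idem prim_idem_mult[OF assms assms] range_prim_idem[OF assms] by simp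
  show "P = prim_idem \<theta>"
    if "transpose P = P \<and> P ** P = P \<and> range (\<lambda>x. P *v x) = eigenspace adj \<theta>" for P
    using that symmetric_idempotent_eqI[of P "prim_idem \<theta>"] transpose_prim_idem
      prim_idem_mult[OF assms assms] range_prim_idem[OF assms] by simp
qed

lemma prim_idem_in_bose_mesner: "prim_idem \<theta> \<in> bose_mesner"
  unfolding prim_idem_def by (rule mat_poly_in_bose_mesner)

lemma sum_scaleR_prim_idem_mult:
  assumes "\<eta> \<in> spec"
  shows "(\<Sum>\<theta>\<in>spec. c \<theta> *\<^sub>R prim_idem \<theta>) ** prim_idem \<eta> = c \<eta> *\<^sub>R prim_idem \<eta>"
proof -
  have "(\<Sum>\<theta>\<in>spec. c \<theta> *\<^sub>R prim_idem \<theta>) ** prim_idem \<eta>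
      = (\<Sum>\<theta>\<in>spec. c \<theta> *\<^sub>R (prim_idem \<theta> ** prim_idem \<eta>))"
    by (simp add: sum_matrix_mult scalar_matrix_assoc)
  also have "\<dots> = (\<Sum>\<theta>\<in>spec. if \<theta> = \<eta> then c \<eta> *\<^sub>R prim_idem \<eta> else 0)"
    by (rule sum.cong) (simp_all add: prim_idem_mult assms)
  finally show ?thesis
    using assms by simp
qed

lemma prim_idem_coeff_eq:
  assumes "(\<Sum>\<theta>\<in>spec. c \<theta> *\<^sub>R prim_idem \<theta>) = (\<Sum>\<theta>\<in>spec. d \<theta> *\<^sub>R prim_idem \<theta>)" "\<eta> \<in> spec"
  shows "c \<eta> = d \<eta>"
proof -
  have "c \<eta> *\<^sub>R prim_idem \<eta> = d \<eta> *\<^sub>R prim_idem \<eta>"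
    using sum_scaleR_prim_idem_mult[OF assms(2)] assms(1) by metis
  then show ?thesis
    using prim_idem_neq_0[OF assms(2)] by simp
qed

lemma inj_on_prim_idem: "inj_on prim_idem spec"
proof (rule inj_onI, rule ccontr)
  fix \<theta> \<eta> assume "\<theta> \<in> spec" "\<eta> \<in> spec" "prim_idem \<theta> = prim_idem \<eta>" "\<theta> \<noteq> \<eta>"
  then show False
    using prim_idem_mult[of \<theta> \<eta>] prim_idem_mult[of \<theta> \<theta>] prim_idem_neq_0 by auto
qed

lemma independent_prim_idem: "independent (prim_idem ` spec)"
proof
  assume "dependent (prim_idem ` spec)"
  then obtain u where u: "\<exists>v\<in>prim_idem ` spec. u v \<noteq> 0" "(\<Sum>v\<in>prim_idem ` spec. u v *\<^sub>R v) = 0"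
    using dependent_finite[of "prim_idem ` spec"] by auto
  then have "(\<Sum>\<theta>\<in>spec. u (prim_idem \<theta>) *\<^sub>R prim_idem \<theta>) = (\<Sum>\<theta>\<in>spec. 0 *\<^sub>R prim_idem \<theta>)"
    by (simp add: sum.reindex[OF inj_on_prim_idem])
  then have "u (prim_idem \<theta>) = 0" if "\<theta> \<in> spec" for \<theta>
    using prim_idem_coeff_eq[of "\<lambda>\<theta>. u (prim_idem \<theta>)" "\<lambda>_. 0"] that by simp
  with u(1) show False by auto
qed

lemma bose_mesner_expansion:
  assumes "M \<in> bose_mesner"
  obtains c where "M = (\<Sum>\<theta>\<in>spec. c \<theta> *\<^sub>R prim_idem \<theta>)"
proof -
  have "bose_mesner \<subseteq> span (prim_idem ` spec)"
  proof (rule card_ge_dim_independent)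
    show "prim_idem ` spec \<subseteq> bose_mesner"
      using prim_idem_in_bose_mesner by auto
    show "dim bose_mesner \<le> card (prim_idem ` spec)"
      using dim_bose_mesner_le card_image[OF inj_on_prim_idem] card_spectrum by simp
  qed (rule independent_prim_idem)
  with assms obtain u where "M = (\<Sum>v\<in>prim_idem ` spec. u v *\<^sub>R v)"
    using span_finite[of "prim_idem ` spec"] by auto
  then have "M = (\<Sum>\<theta>\<in>spec. u (prim_idem \<theta>) *\<^sub>R prim_idem \<theta>)"
    by (simp add: sum.reindex[OF inj_on_prim_idem])
  then show ?thesis
    by (rule that)
qed

lemma krein_eq:
  assumes i: "\<theta>i \<in> spec" and j: "\<theta>j \<in> spec"
    and c: "hadamard (prim_idem \<theta>i) (prim_idem \<theta>j) = (\<Sum>\<theta>\<in>spec. c \<theta> *\<^sub>R prim_idem \<theta>)"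
  shows "krein adj \<theta>i \<theta>j = (\<lambda>\<theta>. if \<theta> \<in> spec then real CARD('a) * c \<theta> else 0)"
proof -
  let ?n = "real CARD('a)"
  have expand: "(1 / ?n) *\<^sub>R (\<Sum>\<theta>\<in>spec. q \<theta> *\<^sub>R eig_proj adj \<theta>)
      = (\<Sum>\<theta>\<in>spec. (q \<theta> / ?n) *\<^sub>R prim_idem \<theta>)" for q
    by (simp add: scaleR_sum_right eig_proj_eq_prim_idem)
  show ?thesis
    unfolding krein_def
  proof (rule the_equality)
    show "(\<forall>\<theta>. \<theta> \<notin> spec \<longrightarrow> (if \<theta> \<in> spec then ?n * c \<theta> else 0) = 0) \<and>
      hadamard (eig_proj adj \<theta>i) (eig_proj adj \<theta>j)
        = (1 / ?n) *\<^sub>R (\<Sum>\<theta>\<in>spec. (if \<theta> \<in> spec then ?n * c \<theta> else 0) *\<^sub>R eig_proj adj \<theta>)"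
      unfolding expand using c i j by (simp add: eig_proj_eq_prim_idem)
  next
    fix q
    assume q: "(\<forall>\<theta>. \<theta> \<notin> spec \<longrightarrow> q \<theta> = 0) \<and>
      hadamard (eig_proj adj \<theta>i) (eig_proj adj \<theta>j)
        = (1 / ?n) *\<^sub>R (\<Sum>\<theta>\<in>spec. q \<theta> *\<^sub>R eig_proj adj \<theta>)"
    have "q \<theta> / ?n = c \<theta>" if "\<theta> \<in> spec" for \<theta>
      using prim_idem_coeff_eq[of "\<lambda>\<theta>. q \<theta> / ?n" c \<theta>] q c i j that
      unfolding expand by (simp add: eig_proj_eq_prim_idem)
    with q show "q = (\<lambda>\<theta>. if \<theta> \<in> spec then ?n * c \<theta> else 0)"
      by (auto simp: field_simps)
  qed
qed

lemma krein_expansion: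
  assumes "\<theta>i \<in> spec" "\<theta>j \<in> spec"
  shows "hadamard (prim_idem \<theta>i) (prim_idem \<theta>j)
    = (\<Sum>\<theta>\<in>spec. (krein adj \<theta>i \<theta>j \<theta> / real CARD('a)) *\<^sub>R prim_idem \<theta>)"
proof -
  obtain c where c: "hadamard (prim_idem \<theta>i) (prim_idem \<theta>j) = (\<Sum>\<theta>\<in>spec. c \<theta> *\<^sub>R prim_idem \<theta>)"
    using bose_mesner_expansion hadamard_in_bose_mesner prim_idem_in_bose_mesner by metis
  then show ?thesis
    unfolding krein_eq[OF assms c] by simp
qed

lemma hadamard_prim_idem_mult_prim_idem:
  assumes "\<theta>i \<in> spec" "\<theta>j \<in> spec" "\<eta> \<in> spec"
  shows "hadamard (prim_idem \<theta>i) (prim_idem \<theta>j) ** prim_idem \<eta>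
    = (krein adj \<theta>i \<theta>j \<eta> / real CARD('a)) *\<^sub>R prim_idem \<eta>"
  unfolding krein_expansion[OF assms(1,2)] by (rule sum_scaleR_prim_idem_mult[OF assms(3)])

lemma krein_outside_spec:
  assumes "\<theta>i \<in> spec" "\<theta>j \<in> spec" "\<eta> \<notin> spec"
  shows "krein adj \<theta>i \<theta>j \<eta> = 0"
proof -
  obtain c where "hadamard (prim_idem \<theta>i) (prim_idem \<theta>j) = (\<Sum>\<theta>\<in>spec. c \<theta> *\<^sub>R prim_idem \<theta>)"
    using bose_mesner_expansion hadamard_in_bose_mesner prim_idem_in_bose_mesner by metis
  from krein_eq[OF assms(1,2) this] show ?thesis
    using assms(3) by simp
qed

lemma valency_in_spec: "real valency \<in> spec"
  using adj_matrix_mult_all_ones unfolding graph_eigenvalues_def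
  by (auto simp: scalar_mult_eq_scaleR vec_eq_iff intro!: exI[of _ "\<chi> x. 1"])

lemma Max_spec: "Max spec = real valency"
proof (rule Max_eqI)
  show "\<theta> \<le> real valency" if "\<theta> \<in> spec" for \<theta>
    using eigenvalue_le_valency eigenvector_exists[OF that] by metis
qed (use valency_in_spec in auto)

lemma prim_idem_valency: "prim_idem (real valency) = (1 / real CARD('a)) *\<^sub>R (\<chi> x y. 1)"
proof -
  let ?J = "\<chi> x y. 1 :: real^'a^'a" and ?j = "\<chi> x. 1 :: real^'a"
  obtain c where c: "?J = (\<Sum>\<theta>\<in>spec. c \<theta> *\<^sub>R prim_idem \<theta>)"
    using bose_mesner_expansion[OF all_ones_in_bose_mesner] .
  have E_j: "prim_idem \<theta> *v ?j = (if \<theta> = real valency then ?j else 0)" for \<theta>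
    using prim_idem_eigenvector[OF valency_in_spec adj_matrix_mult_all_ones] by auto
  have zero: "c \<theta> *\<^sub>R prim_idem \<theta> = 0" if "\<theta> \<in> spec - {real valency}" for \<theta>
  proof -
    have "?J ** prim_idem \<theta> = 0"
      using that E_j by (simp add: all_ones_mult_symmetric[OF transpose_prim_idem] vec_eq_iff)
    then show ?thesis
      using c sum_scaleR_prim_idem_mult[of \<theta> c] that by simp
  qed
  have J: "?J = c (real valency) *\<^sub>R prim_idem (real valency)"
  proof -
    have "(\<Sum>\<theta>\<in>spec - {real valency}. c \<theta> *\<^sub>R prim_idem \<theta>) = 0"
      using zero by (intro sum.neutral) blast
    then show ?thesis
      unfolding c sum.remove[OF finite_spec valency_in_spec] by simp
  qed
  have "real CARD('a) *\<^sub>R ?j = ?J *v ?j"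
    by (simp add: matrix_vector_mult_def vec_eq_iff)
  also have "\<dots> = c (real valency) *\<^sub>R ?j"
    unfolding J using E_j[of "real valency"] by (simp add: scaleR_matrix_vector_assoc[symmetric])
  finally have "c (real valency) = real CARD('a)"
    by (simp add: vec_eq_iff)
  with J show ?thesis
    by simp
qed

lemma krein_valency_factor_eq_0:
  assumes "\<theta> \<in> spec" "\<eta> \<noteq> \<theta>"
  shows "krein adj \<theta> (real valency) \<eta> = 0"
proof (cases "\<eta> \<in> spec")
  case True
  have "hadamard (prim_idem \<theta>) (prim_idem (real valency)) = (1 / real CARD('a)) *\<^sub>R prim_idem \<theta>"
    by (simp add: prim_idem_valency hadamard_def vec_eq_iff)
  then have "(krein adj \<theta> (real valency) \<eta> / real CARD('a)) *\<^sub>R prim_idem \<eta> = 0"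
    using hadamard_prim_idem_mult_prim_idem[OF assms(1) valency_in_spec True]
      prim_idem_mult[OF assms(1) True] assms(2) by (simp add: scalar_matrix_assoc[symmetric])
  then show ?thesis
    using prim_idem_neq_0[OF True] by simp
qed (use assms krein_outside_spec valency_in_spec in blast)

lemma hadamard_prim_idem_mult_prim_idem_valency:
  assumes "\<theta> \<in> spec" "\<eta> \<in> spec"
  shows "hadamard (prim_idem \<theta>) (prim_idem \<eta>) ** prim_idem (real valency)
    = (1 / real CARD('a)) *\<^sub>R (\<chi> x y. (prim_idem \<theta> ** prim_idem \<eta>) $ x $ x)"
  by (simp add: prim_idem_valency matrix_scalar_ac scalar_matrix_assoc[symmetric]
      hadamard_mult_all_ones[OF transpose_prim_idem])

lemma krein_valency_component_eq_0:
  assumes "\<theta> \<in> spec" "\<eta> \<in> spec" "\<eta> \<noteq> \<theta>"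
  shows "krein adj \<theta> \<eta> (real valency) = 0"
proof -
  have "hadamard (prim_idem \<theta>) (prim_idem \<eta>) ** prim_idem (real valency) = 0"
    using hadamard_prim_idem_mult_prim_idem_valency[OF assms(1,2)] prim_idem_mult[OF assms(1,2)] assms(3)
    by (simp add: vec_eq_iff)
  then have "(krein adj \<theta> \<eta> (real valency) / real CARD('a)) *\<^sub>R prim_idem (real valency) = 0"
    using hadamard_prim_idem_mult_prim_idem[OF assms(1,2) valency_in_spec] by simp
  then show ?thesis
    using prim_idem_neq_0[OF valency_in_spec] by simp
qed

lemma krein_square_valency_component_neq_0:
  assumes "\<theta> \<in> spec"
  shows "krein adj \<theta> \<theta> (real valency) \<noteq> 0"
proof
  assume "krein adj \<theta> \<theta> (real valency) = 0"
  then have "(\<chi> x y. prim_idem \<theta> $ x $ x) = (0 :: real^'a^'a)"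
    using hadamard_prim_idem_mult_prim_idem_valency[OF assms assms]
      hadamard_prim_idem_mult_prim_idem[OF assms assms valency_in_spec]
    by (simp add: prim_idem_mult assms)
  then have "trace (prim_idem \<theta>) = 0"
    by (simp add: trace_def vec_eq_iff)
  moreover have "trace (prim_idem \<theta>) > 0"
    by (rule trace_pos_symmetric_idempotent)
      (use transpose_prim_idem prim_idem_mult[OF assms assms] prim_idem_neq_0[OF assms] in simp_all)
  ultimately show False
    by simp
qed

lemma krein_mult_trace_swap:
  assumes "\<theta> \<in> spec" "\<eta> \<in> spec" "\<zeta> \<in> spec"
  shows "krein adj \<theta> \<eta> \<zeta> * trace (prim_idem \<zeta>) = krein adj \<theta> \<zeta> \<eta> * trace (prim_idem \<eta>)"
proof -
  have "trace (hadamard (prim_idem \<theta>) (prim_idem \<eta>) ** prim_idem \<zeta>)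
      = trace (hadamard (prim_idem \<theta>) (prim_idem \<zeta>) ** prim_idem \<eta>)"
    by (rule trace_hadamard_mult_swap[OF transpose_prim_idem transpose_prim_idem])
  then have "krein adj \<theta> \<eta> \<zeta> / real CARD('a) * trace (prim_idem \<zeta>)
      = krein adj \<theta> \<zeta> \<eta> / real CARD('a) * trace (prim_idem \<eta>)"
    by (simp only: hadamard_prim_idem_mult_prim_idem[OF assms]
        hadamard_prim_idem_mult_prim_idem[OF assms(1,3,2)] trace_scaleR)
  then show ?thesis
    by (simp add: field_simps)
qed

lemma krein_swap_eq_0:
  assumes "\<theta> \<in> spec" "\<eta> \<in> spec" "krein adj \<theta> \<theta> \<eta> = 0"
  shows "krein adj \<theta> \<eta> \<theta> = 0"
  using krein_mult_trace_swap[OF assms(1,1,2)] assms(3)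
    trace_pos_symmetric_idempotent[OF transpose_prim_idem prim_idem_mult[OF assms(1,1), simplified]
      prim_idem_neq_0[OF assms(1)]]
  by simp

lemma kernel_prim_idem_subset_range_hadamard:
  assumes "\<theta> \<in> spec" "\<And>\<eta>. \<eta> \<in> spec - {\<theta>} \<Longrightarrow> krein adj \<theta> \<theta> \<eta> \<noteq> 0"
  shows "{w. prim_idem \<theta> *v w = 0} \<subseteq> range (\<lambda>x. hadamard (prim_idem \<theta>) (prim_idem \<theta>) *v x)"
proof
  let ?H = "hadamard (prim_idem \<theta>) (prim_idem \<theta>)"
  fix w assume "w \<in> {w. prim_idem \<theta> *v w = 0}"
  have "w = (\<Sum>\<eta>\<in>spec. prim_idem \<eta> *v w)"
    using sum_prim_idem by (simp add: sum_matrix_vector_mult[symmetric])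
  also have "\<dots> = (\<Sum>\<eta>\<in>spec - {\<theta>}. prim_idem \<eta> *v w)"
    using \<open>w \<in> _\<close> assms(1) by (simp add: sum.remove)
  also have "\<dots> \<in> range (\<lambda>x. ?H *v x)"
  proof (rule subspace_sum[OF subspace_range_matrix_vector_mult])
    fix \<eta> assume \<eta>: "\<eta> \<in> spec - {\<theta>}"
    let ?q = "krein adj \<theta> \<theta> \<eta> / real CARD('a)"
    have "?H ** prim_idem \<eta> = ?q *\<^sub>R prim_idem \<eta>"
      using \<eta> hadamard_prim_idem_mult_prim_idem[OF assms(1,1)] by simp
    then have "?H *v ((1 / ?q) *\<^sub>R (prim_idem \<eta> *v w)) = (1 / ?q) *\<^sub>R (?q *\<^sub>R prim_idem \<eta> *v w)"
      by (simp add: matrix_vector_mul_assoc matrix_vector_mult_scaleR)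
    also have "\<dots> = prim_idem \<eta> *v w"
      using assms(2)[OF \<eta>] by (simp add: scaleR_matrix_vector_assoc[symmetric])
    finally show "prim_idem \<eta> *v w \<in> range (\<lambda>x. ?H *v x)"
      by (rule range_eqI[OF sym])
  qed
  finally show "w \<in> range (\<lambda>x. ?H *v x)" .
qed

lemma absolute_bound:
  assumes "\<theta> \<in> spec" "\<And>\<eta>. \<eta> \<in> spec - {\<theta>} \<Longrightarrow> krein adj \<theta> \<theta> \<eta> \<noteq> 0"
  shows "2 * (CARD('a) - eig_mult adj \<theta>) \<le> eig_mult adj \<theta> * (eig_mult adj \<theta> + 1)"
proof -
  let ?E = "prim_idem \<theta>"
  have range_E: "dim (range (\<lambda>x. ?E *v x)) = eig_mult adj \<theta>"
    by (simp add: range_prim_idem[OF assms(1)] eig_mult_def)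
  have "CARD('a) - eig_mult adj \<theta> = dim {w. ?E *v w = 0}"
    using dim_kernel_plus_dim_range_idempotent[OF prim_idem_mult[OF assms(1,1), simplified]] range_E
    by simp
  also have "\<dots> \<le> dim (range (\<lambda>x. hadamard ?E ?E *v x))"
    by (rule dim_subset[OF kernel_prim_idem_subset_range_hadamard[OF assms]])
  finally show ?thesis
    using dim_range_hadamard_square_le[OF transpose_prim_idem prim_idem_mult[OF assms(1,1), simplified]]
    unfolding range_E by linarith
qed

lemma exists_krein_square_eq_0:
  assumes "\<theta> \<in> spec" and "(eig_mult adj \<theta> + 2) * (eig_mult adj \<theta> + 1) \<le> 2 * CARD('a)"
  obtains \<eta> where "\<eta> \<in> spec - {\<theta>}" "krein adj \<theta> \<theta> \<eta> = 0"
proof -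
  have "\<not> 2 * (CARD('a) - eig_mult adj \<theta>) \<le> eig_mult adj \<theta> * (eig_mult adj \<theta> + 1)"
    using assms(2) by (simp add: algebra_simps)
  then show ?thesis
    using absolute_bound[OF assms(1)] that by blast
qed

end

context drg_spectrum
begin

lemma Q_polynomial_wrt_diameter_3:
  assumes diam: "graph_diameter adj = 3" and spec: "spec = {real valency, \<theta>, \<eta>, \<zeta>}"
    and dist: "distinct [real valency, \<theta>, \<eta>, \<zeta>]" and zero: "krein adj \<theta> \<theta> \<zeta> = 0"
  shows "Q_polynomial_wrt adj \<theta>"
proof -
  let ?\<sigma> = "(!) [real valency, \<theta>, \<eta>, \<zeta>]"
  have in_spec: "\<theta> \<in> spec" "\<eta> \<in> spec" "\<zeta> \<in> spec"
    using spec by auto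
  have "bij_betw ?\<sigma> {0..graph_diameter adj} spec"
    by (rule bij_betw_nth) (use dist spec diam in auto)
  moreover have "krein adj (?\<sigma> 1) (?\<sigma> j) (?\<sigma> h) = 0"
    if "j \<le> 3" "h \<le> 3" "1 < \<bar>int j - int h\<bar>" for j h
  proof -
    have "j \<in> {0, 1, 2, 3}" "h \<in> {0, 1, 2, 3}"
      using that(1,2) by auto
    with that(3) consider "j = 0" "h = 2" | "j = 0" "h = 3" | "j = 1" "h = 3" | "j = 2" "h = 0"
      | "j = 3" "h = 0" | "j = 3" "h = 1"
      by auto
    then show ?thesis
      using dist krein_valency_factor_eq_0[OF in_spec(1)] krein_valency_component_eq_0[OF in_spec(1)] in_spec zero
        krein_swap_eq_0[OF in_spec(1,3) zero]
      by cases (auto simp: numeral_eq_Suc)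
  qed
  ultimately show ?thesis
    unfolding Q_polynomial_wrt_def using Max_spec diam by (intro exI[of _ ?\<sigma>]) auto
qed

end

theorem lemma13:
  fixes adj :: "'a::finite \<Rightarrow> 'a \<Rightarrow> bool"
    and k \<theta>1 \<theta>2 \<theta>3 :: real
  assumes "distance_regular adj"
    and "graph_diameter adj = 3"
    and "graph_eigenvalues adj = {k, \<theta>1, \<theta>2, \<theta>3}"
    and "k > \<theta>1" and "\<theta>1 > \<theta>2" and "\<theta>2 > \<theta>3"
    and "real CARD('a) \<ge> real ((eig_mult adj \<theta>1 + 2) * (eig_mult adj \<theta>1 + 1)) / 2"
  shows "(krein adj \<theta>1 \<theta>1 \<theta>2 = 0 \<or> krein adj \<theta>1 \<theta>1 \<theta>3 = 0) \<and> Q_polynomial_wrt adj \<theta>1"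
proof -
  have dist: "distinct [k, \<theta>1, \<theta>2, \<theta>3]"
    using assms(4-6) by auto
  interpret drg_spectrum adj
    by unfold_locales (use assms(1-3) dist in auto)
  have k: "k = real valency"
    using Max_spec assms(3-6) by (simp add: max_def)
  have "(eig_mult adj \<theta>1 + 2) * (eig_mult adj \<theta>1 + 1) \<le> 2 * CARD('a)"
    using assms(7) by (simp only: of_nat_le_iff[symmetric])
  then obtain \<eta> where \<eta>: "\<eta> \<in> spec - {\<theta>1}" "krein adj \<theta>1 \<theta>1 \<eta> = 0"
    using exists_krein_square_eq_0[of \<theta>1] assms(3) by auto
  then have "\<eta> = \<theta>2 \<or> \<eta> = \<theta>3"
    using krein_square_valency_component_neq_0[of \<theta>1] assms(3) k by auto
  then show ?thesis
    using \<eta> Q_polynomial_wrt_diameter_3[of \<theta>1 \<theta>2 \<theta>3] Q_polynomial_wrt_diameter_3[of \<theta>1 \<theta>3 \<theta>2]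
      assms(2,3) dist k by (auto simp: insert_commute)
qed

end
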